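(* Let $X$ be a real Hilbert space, $T:X\to X$, $C\subseteq X$ nonempty and $\varphi:[0,\infty)\to[0,\infty)$ an increasing function vanishing only at $0$. If $T$ is uniformly $(P_2)$ on $C$ with modulus $\varphi$, then $T$ is uniformly firmly nonexpansive on $C$ with modulus $\varphi$.
   Context: $T$ is uniformly firmly nonexpansive on $C$ with modulus $\varphi$ if $T(C)\subseteq C$ and for all $x,y\in C$, $t\in[0,1]$: $\|Tx-Ty\|^2\le\|((1-t)x+tTx)-((1-t)y+tTy)\|^2-2(1-t)\varphi(\|Tx-Ty\|)$. $T$ is uniformly $(P_2)$ on $C$ with modulus $\varphi$ if $T(C)\subseteq C$ and for all $x,y\in C$: $2\|Tx-Ty\|^2\le\|x-Ty\|^2+\|y-Tx\|^2-\|x-Tx\|^2-\|y-Ty\|^2-2\varphi(\|Tx-Ty\|)$. *)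

theory Defs
  imports "HOL-Analysis.Analysis"
begin

definition unif_firmly_nonexpansive ::
  "('a::real_inner \<Rightarrow> 'a) \<Rightarrow> 'a set \<Rightarrow> (real \<Rightarrow> real) \<Rightarrow> bool" where
  "unif_firmly_nonexpansive T C \<phi> \<longleftrightarrow> T ` C \<subseteq> C \<and>
     (\<forall>x\<in>C. \<forall>y\<in>C. \<forall>t\<in>{0..1::real}.
        (norm (T x - T y))\<^sup>2 \<le>
          (norm (((1 - t) *\<^sub>R x + t *\<^sub>R T x) - ((1 - t) *\<^sub>R y + t *\<^sub>R T y)))\<^sup>2
          - 2 * (1 - t) * \<phi> (norm (T x - T y)))"

definition unif_P2 ::
  "('a::real_inner \<Rightarrow> 'a) \<Rightarrow> 'a set \<Rightarrow> (real \<Rightarrow> real) \<Rightarrow> bool" where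
  "unif_P2 T C \<phi> \<longleftrightarrow> T ` C \<subseteq> C \<and>
     (\<forall>x\<in>C. \<forall>y\<in>C.
        2 * (norm (T x - T y))\<^sup>2 \<le>
          (norm (x - T y))\<^sup>2 + (norm (y - T x))\<^sup>2 - (norm (x - T x))\<^sup>2
          - (norm (y - T y))\<^sup>2 - 2 * \<phi> (norm (T x - T y)))"

end

theory Submission
  imports Defs
begin

text \<open>With \<open>a = x - y\<close> and \<open>b = T x - T y\<close>, the \<open>(P\<^sub>2)\<close> inequality says exactly
  \<open>\<parallel>b\<parallel>\<^sup>2 \<le> a \<bullet> b - \<phi>(\<parallel>b\<parallel>)\<close>. Together with \<open>\<parallel>a - b\<parallel>\<^sup>2 \<ge> 0\<close> this yields
  \<open>\<parallel>a\<parallel>\<^sup>2 \<ge> \<parallel>b\<parallel>\<^sup>2 + 2\<phi>(\<parallel>b\<parallel>)\<close>, and \<open>\<parallel>(1-t)a + tb\<parallel>\<^sup>2 - 2(1-t)\<phi>(\<parallel>b\<parallel>) - \<parallel>b\<parallel>\<^sup>2\<close> is a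
  combination of these two slacks with nonnegative coefficients \<open>(1-t)\<^sup>2\<close> and \<open>2t(1-t)\<close>.\<close>

lemma norm_cross_diffs_eq_inner:
  fixes x y u v :: "'a::real_inner"
  shows "(norm (x - v))\<^sup>2 + (norm (y - u))\<^sup>2 - (norm (x - u))\<^sup>2 - (norm (y - v))\<^sup>2
           = 2 * ((x - y) \<bullet> (u - v))"
  unfolding power2_norm_eq_inner
  by (simp add: inner_diff_left inner_diff_right inner_commute)

lemma norm_convex_comb_power2:
  fixes a b :: "'a::real_inner"
  shows "(norm ((1 - t) *\<^sub>R a + t *\<^sub>R b))\<^sup>2
           = (1 - t)\<^sup>2 * (a \<bullet> a) + 2 * t * (1 - t) * (a \<bullet> b) + t\<^sup>2 * (b \<bullet> b)"
  unfolding power2_norm_eq_inner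
  by (simp add: inner_add_left inner_add_right inner_commute power2_eq_square algebra_simps)

lemma norm_power2_le_convex_comb:
  fixes a b :: "'a::real_inner"
  assumes ab: "b \<bullet> b \<le> a \<bullet> b - p" and t: "0 \<le> t" "t \<le> 1"
  shows "(norm b)\<^sup>2 \<le> (norm ((1 - t) *\<^sub>R a + t *\<^sub>R b))\<^sup>2 - 2 * (1 - t) * p"
proof -
  have "0 \<le> (a - b) \<bullet> (a - b)" by simp
  then have "0 \<le> a \<bullet> a - 2 * (a \<bullet> b) + b \<bullet> b"
    by (simp add: inner_diff_left inner_diff_right inner_commute)
  with ab have slack_a: "0 \<le> (1 - t)\<^sup>2 * (a \<bullet> a - b \<bullet> b - 2 * p)" by simp
  have slack_ab: "0 \<le> t * (1 - t) * (a \<bullet> b - b \<bullet> b - p)" using ab t by simp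
  have "(norm ((1 - t) *\<^sub>R a + t *\<^sub>R b))\<^sup>2 - 2 * (1 - t) * p - b \<bullet> b
          = (1 - t)\<^sup>2 * (a \<bullet> a - b \<bullet> b - 2 * p) + 2 * (t * (1 - t) * (a \<bullet> b - b \<bullet> b - p))"
    unfolding norm_convex_comb_power2 by (simp add: power2_eq_square algebra_simps)
  with slack_a slack_ab show ?thesis
    unfolding power2_norm_eq_inner by linarith
qed

lemma unif_P2_imp_inner_ge:
  assumes "unif_P2 T C \<phi>" "x \<in> C" "y \<in> C"
  shows "(T x - T y) \<bullet> (T x - T y) \<le> (x - y) \<bullet> (T x - T y) - \<phi> (norm (T x - T y))"
proof -
  have "2 * (norm (T x - T y))\<^sup>2 \<le> 2 * ((x - y) \<bullet> (T x - T y)) - 2 * \<phi> (norm (T x - T y))"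
    using assms norm_cross_diffs_eq_inner[of x "T y" y "T x"] unfolding unif_P2_def by fastforce
  then show ?thesis unfolding power2_norm_eq_inner by linarith
qed

theorem proposition4p3:
  fixes T :: "'a::{real_inner, complete_space} \<Rightarrow> 'a"
    and C :: "'a set"
    and \<phi> :: "real \<Rightarrow> real"
  assumes "C \<noteq> {}"
    and "mono_on {0..} \<phi>"
    and "\<And>t. t \<ge> 0 \<Longrightarrow> \<phi> t \<ge> 0"
    and "\<And>t. t \<ge> 0 \<Longrightarrow> \<phi> t = 0 \<longleftrightarrow> t = 0"
    and "unif_P2 T C \<phi>"
  shows "unif_firmly_nonexpansive T C \<phi>"
  unfolding unif_firmly_nonexpansive_def
proof (intro conjI ballI)
  show "T ` C \<subseteq> C" using assms(5) unfolding unif_P2_def by blast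
next
  fix x y t assume "x \<in> C" "y \<in> C" "t \<in> {0..1::real}"
  then have "(norm (T x - T y))\<^sup>2 \<le> (norm ((1 - t) *\<^sub>R (x - y) + t *\<^sub>R (T x - T y)))\<^sup>2
               - 2 * (1 - t) * \<phi> (norm (T x - T y))"
    by (intro norm_power2_le_convex_comb unif_P2_imp_inner_ge[OF assms(5)]) auto
  moreover have "(1 - t) *\<^sub>R (x - y) + t *\<^sub>R (T x - T y)
                   = ((1 - t) *\<^sub>R x + t *\<^sub>R T x) - ((1 - t) *\<^sub>R y + t *\<^sub>R T y)"
    by (simp add: algebra_simps)
  ultimately show "(norm (T x - T y))\<^sup>2 \<le>
          (norm (((1 - t) *\<^sub>R x + t *\<^sub>R T x) - ((1 - t) *\<^sub>R y + t *\<^sub>R T y)))\<^sup>2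
          - 2 * (1 - t) * \<phi> (norm (T x - T y))"
    by simp
qed

end
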